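(* Let $G$ be a connected graph of order at least two and let $D$ be a minimal certified dominating set of $G$. If $v$ is a vertex with $N_G[v]\subseteq D$, then $v$ is a leaf or a weak support of $G$. Moreover, the induced subgraph $G[\{v\in D\colon N_G[v]\subseteq D\}]$ is a corona (or has no vertices).
   Context: All graphs are finite and simple; $N_G[v]=N_G(v)\cup\{v\}$. A leaf is a vertex of degree one; a support is the neighbor of a leaf; a support is weak if it is adjacent to exactly one leaf and strong if adjacent to at least two leaves. A set $D\subseteq V_G$ is a dominating set of $G$ if every vertex of $V_G-D$ has a neighbor in $D$. A set $D$ is a certified dominating set of $G$ if $D$ is dominating and every vertex of $D$ has either zero or at least two neighbors in $V_G-D$; it is a minimal certified dominating set if no proper subset of $D$ is a certified dominating set. A graph is a corona if it equals $H\circ K_1$ for some graph $H$, i.e., it is obtained from $H$ by attaching one new pendant vertex to each vertex of $H$; equivalently every vertex is a leaf or adjacent to exactly one leaf. *)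

theory Defs
  imports Main
begin

definition simple_graph :: "'a set \<Rightarrow> ('a \<Rightarrow> 'a \<Rightarrow> bool) \<Rightarrow> bool" where
  "simple_graph V E \<longleftrightarrow> finite V \<and> (\<forall>u v. E u v \<longrightarrow> u \<in> V \<and> v \<in> V)
     \<and> (\<forall>u v. E u v \<longrightarrow> E v u) \<and> (\<forall>v. \<not> E v v)"

definition connected_graph :: "'a set \<Rightarrow> ('a \<Rightarrow> 'a \<Rightarrow> bool) \<Rightarrow> bool" where
  "connected_graph V E \<longleftrightarrow> (\<forall>u\<in>V. \<forall>v\<in>V. E\<^sup>*\<^sup>* u v)"

definition nbhd :: "'a set \<Rightarrow> ('a \<Rightarrow> 'a \<Rightarrow> bool) \<Rightarrow> 'a \<Rightarrow> 'a set" where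
  "nbhd V E v = {u \<in> V. E v u}"

definition cnbhd :: "'a set \<Rightarrow> ('a \<Rightarrow> 'a \<Rightarrow> bool) \<Rightarrow> 'a \<Rightarrow> 'a set" where
  "cnbhd V E v = insert v (nbhd V E v)"

definition leaf :: "'a set \<Rightarrow> ('a \<Rightarrow> 'a \<Rightarrow> bool) \<Rightarrow> 'a \<Rightarrow> bool" where
  "leaf V E v \<longleftrightarrow> v \<in> V \<and> card (nbhd V E v) = 1"

definition weak_support :: "'a set \<Rightarrow> ('a \<Rightarrow> 'a \<Rightarrow> bool) \<Rightarrow> 'a \<Rightarrow> bool" where
  "weak_support V E v \<longleftrightarrow> v \<in> V \<and> card {u \<in> nbhd V E v. leaf V E u} = 1"

definition dominating :: "'a set \<Rightarrow> ('a \<Rightarrow> 'a \<Rightarrow> bool) \<Rightarrow> 'a set \<Rightarrow> bool" where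
  "dominating V E D \<longleftrightarrow> D \<subseteq> V \<and> (\<forall>v \<in> V - D. \<exists>u \<in> D. E v u)"

definition certified_dominating :: "'a set \<Rightarrow> ('a \<Rightarrow> 'a \<Rightarrow> bool) \<Rightarrow> 'a set \<Rightarrow> bool" where
  "certified_dominating V E D \<longleftrightarrow> dominating V E D \<and>
     (\<forall>v \<in> D. card (nbhd V E v \<inter> (V - D)) = 0 \<or> card (nbhd V E v \<inter> (V - D)) \<ge> 2)"

definition minimal_certified_dominating :: "'a set \<Rightarrow> ('a \<Rightarrow> 'a \<Rightarrow> bool) \<Rightarrow> 'a set \<Rightarrow> bool" where
  "minimal_certified_dominating V E D \<longleftrightarrow> certified_dominating V E D \<and>
     (\<forall>D'. D' \<subset> D \<longrightarrow> \<not> certified_dominating V E D')"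

text \<open>The induced subgraph G[S] is represented by (S, E) since nbhd restricts to S.
  corona S E: G[S] = H \<circ> K1 for some graph H, i.e. S splits into H and the pendant
  vertices S - H, paired bijectively by f, where f h is adjacent (in G[S]) only to h.\<close>
definition corona :: "'a set \<Rightarrow> ('a \<Rightarrow> 'a \<Rightarrow> bool) \<Rightarrow> bool" where
  "corona S E \<longleftrightarrow> (\<exists>H f. H \<subseteq> S \<and> bij_betw f H (S - H) \<and> (\<forall>h \<in> H. nbhd S E (f h) = {h}))"

end

theory Submission
  imports Defs
begin

text \<open>Call \<open>v \<in> D\<close> enclosed if \<open>N[v] \<subseteq> D\<close>. Deleting a nonempty set \<open>X\<close> of enclosed vertices
  from \<open>D\<close> leaves a certified dominating set as soon as every vertex of \<open>X\<close> has a neighbour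
  outside \<open>X\<close> and no enclosed vertex outside \<open>X\<close> has exactly one neighbour in \<open>X\<close>; minimality
  of \<open>D\<close> rules out every such \<open>X\<close>. Two leaves at a common enclosed vertex form such an \<open>X\<close>, so an
  enclosed vertex has at most one leaf neighbour; \<open>X = {v}\<close> shows that every enclosed vertex has
  an enclosed neighbour. Enclosed non-leaves \<open>R\<close> without a leaf neighbour are excluded by
  \<open>X = (R - Y) \<union> L\<close>, where \<open>Y\<close> is a maximal independent set among the vertices of \<open>R\<close> whose
  neighbours all lie in \<open>R\<close>, and \<open>L\<close> consists of the enclosed leaves at distance two from
  \<open>R - Y\<close>. So the enclosed non-leaves are weak supports and every enclosed leaf hangs on one
  of them, which makes the enclosed vertices induce a corona; the exception, an enclosed leaf
  adjacent to a leaf, forces the connected graph to be \<open>K\<^sub>2\<close>, itself a corona.\<close>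

locale graph =
  fixes V :: "'a set" and E :: "'a \<Rightarrow> 'a \<Rightarrow> bool"
  assumes simple: "simple_graph V E"
begin

lemma finite_vertices: "finite V"
  using simple by (simp add: simple_graph_def)

lemma edge_vertices: "E u v \<Longrightarrow> u \<in> V \<and> v \<in> V"
  using simple by (simp add: simple_graph_def)

lemma edge_sym: "E u v \<Longrightarrow> E v u"
  using simple by (simp add: simple_graph_def)

lemma edge_irrefl: "\<not> E v v"
  using simple by (simp add: simple_graph_def)

lemma mem_nbhd_iff [simp]: "u \<in> nbhd V E v \<longleftrightarrow> E v u"
  using edge_vertices by (auto simp: nbhd_def)

lemma finite_nbhd: "finite (nbhd V E v)"
  using finite_vertices by (simp add: nbhd_def)

lemma nbhd_subset_restrict: "S \<subseteq> V \<Longrightarrow> nbhd S E v = nbhd V E v \<inter> S"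
  by (auto simp: nbhd_def)

lemma leaf_nbhd: "leaf V E l \<Longrightarrow> E l p \<Longrightarrow> nbhd V E l = {p}"
  by (metis card_1_singletonE leaf_def mem_nbhd_iff singletonD)

lemma leaf_neighbour_unique: "leaf V E l \<Longrightarrow> E l p \<Longrightarrow> E l q \<Longrightarrow> p = q"
  using leaf_nbhd by fastforce

lemma leaf_not_two_neighbours: "leaf V E l \<Longrightarrow> \<not> 2 \<le> card (nbhd V E l)"
  by (simp add: leaf_def)

lemma two_le_card_nbhd:
  assumes "v \<in> V" "E v u" "\<not> leaf V E v"
  shows "2 \<le> card (nbhd V E v)"
proof -
  have "card (nbhd V E v) \<noteq> 0"
    using assms(2) finite_nbhd by (metis card_0_eq empty_iff mem_nbhd_iff)
  moreover have "card (nbhd V E v) \<noteq> 1"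
    using assms(1,3) by (simp add: leaf_def)
  ultimately show ?thesis by linarith
qed

lemma connected_has_neighbour:
  assumes "connected_graph V E" "2 \<le> card V" "v \<in> V"
  shows "\<exists>u. E v u"
proof -
  obtain u where u: "u \<in> V" "u \<noteq> v"
    using assms(2,3) by (metis card_le_Suc0_iff_eq not_less_eq_eq numeral_2_eq_2 finite_vertices)
  with assms(1,3) have "E\<^sup>*\<^sup>* v u"
    by (simp add: connected_graph_def)
  then show ?thesis
    using u(2) by (cases rule: converse_rtranclpE) auto
qed

lemma connected_adjacent_leaves:
  assumes "connected_graph V E" "leaf V E a" "leaf V E b" "E a b"
  shows "V = {a, b}"
proof -
  have "c \<in> {a, b}" if "E\<^sup>*\<^sup>* a c" for c
    using that
  proof (induction rule: rtranclp_induct)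
    case (step y z)
    then show ?case
      using assms(2-4) leaf_neighbour_unique edge_sym by blast
  qed simp
  moreover have "a \<in> V" "b \<in> V"
    using edge_vertices assms(4) by auto
  ultimately show ?thesis
    using assms(1) unfolding connected_graph_def by blast
qed

lemma corona_by_unique_leaves:
  assumes S: "S \<subseteq> V"
    and leaf_attached: "\<And>s. s \<in> S \<Longrightarrow> leaf V E s \<Longrightarrow> \<exists>p\<in>S. E s p \<and> \<not> leaf V E p"
    and unique_leaf: "\<And>h. h \<in> S \<Longrightarrow> \<not> leaf V E h \<Longrightarrow> \<exists>!l. E h l \<and> leaf V E l"
    and leaf_closed: "\<And>h l. h \<in> S \<Longrightarrow> E h l \<Longrightarrow> leaf V E l \<Longrightarrow> l \<in> S"
  shows "corona S E"
proof -
  define H where "H = {s \<in> S. \<not> leaf V E s}"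
  define f where "f h = (THE l. E h l \<and> leaf V E l)" for h
  have f: "E h (f h) \<and> leaf V E (f h)" if "h \<in> H" for h
    using theI'[OF unique_leaf] that unfolding f_def H_def by blast
  have f_eq: "f h = l" if "h \<in> H" "E h l" "leaf V E l" for h l
    using the1_equality[OF unique_leaf] that unfolding f_def H_def by blast
  have "inj_on f H"
  proof (rule inj_onI)
    fix x y assume "x \<in> H" "y \<in> H" "f x = f y"
    then show "x = y"
      using f leaf_neighbour_unique edge_sym by metis
  qed
  moreover have "f ` H = S - H"
  proof
    show "f ` H \<subseteq> S - H"
      using f leaf_closed by (auto simp: H_def)
    show "S - H \<subseteq> f ` H"
    proof
      fix l assume l: "l \<in> S - H"
      then have "leaf V E l"
        by (simp add: H_def)
      with l obtain p where "p \<in> S" "E l p" "\<not> leaf V E p"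
        using leaf_attached by blast
      then have "p \<in> H" "f p = l"
        using f_eq edge_sym \<open>leaf V E l\<close> by (auto simp: H_def)
      then show "l \<in> f ` H"
        by blast
    qed
  qed
  moreover have "nbhd S E (f h) = {h}" if h: "h \<in> H" for h
  proof -
    have "nbhd V E (f h) = {h}"
      using f[OF h] leaf_nbhd edge_sym by blast
    with h show ?thesis
      by (auto simp: nbhd_subset_restrict[OF S] H_def)
  qed
  ultimately show ?thesis
    unfolding corona_def bij_betw_def by (intro exI[of _ H] exI[of _ f]) (auto simp: H_def)
qed

lemma maximal_independent_subset:
  assumes "finite U"
  obtains Y where "Y \<subseteq> U" "\<forall>a\<in>Y. \<forall>b\<in>Y. \<not> E a b" "\<forall>x\<in>U - Y. \<exists>y\<in>Y. E x y"
proof -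
  define F where "F = {Y. Y \<subseteq> U \<and> (\<forall>a\<in>Y. \<forall>b\<in>Y. \<not> E a b)}"
  have "finite F" "{} \<in> F"
    using assms by (simp_all add: F_def finite_Collect_subsets)
  then obtain Y where Y: "Y \<in> F" and max: "\<forall>Y'\<in>F. Y \<subseteq> Y' \<longrightarrow> Y = Y'"
    using finite_has_maximal by blast
  have YU: "Y \<subseteq> U" and indep: "\<forall>a\<in>Y. \<forall>b\<in>Y. \<not> E a b"
    using Y by (auto simp: F_def)
  have "\<forall>x\<in>U - Y. \<exists>y\<in>Y. E x y"
  proof (intro ballI, rule ccontr)
    fix x assume x: "x \<in> U - Y"
    assume "\<not> (\<exists>y\<in>Y. E x y)"
    then have "insert x Y \<in> F"
      using x YU indep edge_sym edge_irrefl by (auto simp: F_def)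
    with max x show False
      by blast
  qed
  with YU indep show thesis
    by (rule that)
qed

end

locale certified_dom = graph +
  fixes D :: "'a set"
  assumes certified: "certified_dominating V E D"
begin

definition enclosed :: "'a set" where
  "enclosed = {v \<in> D. cnbhd V E v \<subseteq> D}"

lemma dominating_subset: "D \<subseteq> V"
  using certified by (simp add: certified_dominating_def dominating_def)

lemma mem_enclosed_iff: "v \<in> enclosed \<longleftrightarrow> v \<in> D \<and> (\<forall>u. E v u \<longrightarrow> u \<in> D)"
  by (auto simp: enclosed_def cnbhd_def)

lemma enclosed_subset: "enclosed \<subseteq> V"
  using dominating_subset mem_enclosed_iff by blast

lemma leaf_neighbour_enclosed:
  assumes "v \<in> enclosed" "E v l" "leaf V E l"
  shows "l \<in> enclosed"
  using assms leaf_neighbour_unique edge_sym unfolding mem_enclosed_iff by metis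

text \<open>Removing \<open>X\<close> changes the outside neighbourhoods only of vertices of \<open>enclosed - X\<close>;
  the other vertices of \<open>D\<close> already have at least two neighbours outside \<open>D\<close>.\<close>

lemma certified_dominating_Diff:
  assumes X: "X \<subseteq> enclosed"
    and escape: "\<forall>x\<in>X. \<exists>y. E x y \<and> y \<notin> X"
    and not_one: "\<forall>w\<in>enclosed - X. card (nbhd V E w \<inter> X) \<noteq> 1"
  shows "certified_dominating V E (D - X)"
  unfolding certified_dominating_def dominating_def
proof (intro conjI ballI)
  show "D - X \<subseteq> V"
    using dominating_subset by blast
next
  fix v assume v: "v \<in> V - (D - X)"
  show "\<exists>u\<in>D - X. E v u"
  proof (cases "v \<in> D")
    case True
    with v obtain y where "E v y" "y \<notin> X"
      using escape by blast
    moreover have "y \<in> D"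
      using True v X \<open>E v y\<close> mem_enclosed_iff by blast
    ultimately show ?thesis by blast
  next
    case False
    with v certified obtain u where u: "u \<in> D" "E v u"
      unfolding certified_dominating_def dominating_def by blast
    have "u \<notin> X"
      using False X edge_sym[OF u(2)] mem_enclosed_iff by blast
    with u show ?thesis by blast
  qed
next
  fix v assume v: "v \<in> D - X"
  let ?P = "nbhd V E v \<inter> (V - (D - X))"
  show "card ?P = 0 \<or> 2 \<le> card ?P"
  proof (cases "v \<in> enclosed")
    case True
    then have "?P = nbhd V E v \<inter> X"
      using X dominating_subset mem_enclosed_iff by auto
    moreover have "card (nbhd V E v \<inter> X) \<noteq> 1"
      using not_one True v by blast
    ultimately show ?thesis
      by (metis One_nat_def less_2_cases_iff not_le)
  next
    case False
    with v obtain u where u: "E v u" "u \<notin> D"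
      using mem_enclosed_iff by blast
    let ?Q = "nbhd V E v \<inter> (V - D)"
    have "card ?Q \<noteq> 0"
      using u edge_vertices finite_nbhd by (metis DiffI IntI card_0_eq empty_iff finite_Int mem_nbhd_iff)
    then have "2 \<le> card ?Q"
      using certified v by (auto simp: certified_dominating_def)
    also have "card ?Q \<le> card ?P"
      by (rule card_mono) (use finite_nbhd in auto)
    finally show ?thesis ..
  qed
qed

end

locale minimal_certified_dom = graph +
  fixes D :: "'a set"
  assumes minimal: "minimal_certified_dominating V E D"
    and no_isolated: "\<And>v. v \<in> V \<Longrightarrow> \<exists>u. E v u"
begin

sublocale certified_dom V E D
  using minimal by unfold_locales (simp add: minimal_certified_dominating_def)

lemma no_removable_subset:
  assumes "X \<subseteq> enclosed" "X \<noteq> {}"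
    and "\<forall>x\<in>X. \<exists>y. E x y \<and> y \<notin> X"
    and "\<forall>w\<in>enclosed - X. card (nbhd V E w \<inter> X) \<noteq> 1"
  shows False
proof -
  have "D - X \<subset> D"
    using assms(1,2) mem_enclosed_iff by blast
  with certified_dominating_Diff[OF assms(1,3,4)] minimal show False
    by (simp add: minimal_certified_dominating_def)
qed

lemma enclosed_has_enclosed_neighbour:
  assumes v: "v \<in> enclosed"
  shows "\<exists>w\<in>enclosed. E v w"
proof (rule ccontr)
  assume isolated: "\<not> ?thesis"
  show False
  proof (rule no_removable_subset[of "{v}"])
    show "\<forall>x\<in>{v}. \<exists>y. E x y \<and> y \<notin> {v}"
      using no_isolated v enclosed_subset edge_irrefl by blast
    show "\<forall>w\<in>enclosed - {v}. card (nbhd V E w \<inter> {v}) \<noteq> 1"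
      using isolated edge_sym[of _ v] by (auto simp: Int_insert_right)
  qed (use v in auto)
qed

lemma enclosed_at_most_one_leaf:
  assumes v: "v \<in> enclosed"
    and l: "E v l1" "E v l2" "leaf V E l1" "leaf V E l2"
  shows "l1 = l2"
proof (rule ccontr)
  assume ne: "l1 \<noteq> l2"
  have only_v: "E w l \<Longrightarrow> w = v" if "l \<in> {l1, l2}" for w l
    using that l leaf_neighbour_unique edge_sym by blast
  show False
  proof (rule no_removable_subset[of "{l1, l2}"])
    show "{l1, l2} \<subseteq> enclosed"
      using leaf_neighbour_enclosed v l by blast
    show "\<forall>x\<in>{l1, l2}. \<exists>y. E x y \<and> y \<notin> {l1, l2}"
      using l edge_sym only_v edge_irrefl by blast
    have "nbhd V E w \<inter> {l1, l2} = (if w = v then {l1, l2} else {})" for w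
      using only_v l by auto
    then show "\<forall>w\<in>enclosed - {l1, l2}. card (nbhd V E w \<inter> {l1, l2}) \<noteq> 1"
      using ne by simp
  qed simp
qed

definition leafless :: "'a set" where
  "leafless = {s \<in> enclosed. 2 \<le> card (nbhd V E s) \<and> (\<forall>u. E s u \<longrightarrow> \<not> leaf V E u)}"

definition leaves_near :: "'a set \<Rightarrow> 'a set" where
  "leaves_near Z = {l \<in> enclosed. leaf V E l \<and> (\<exists>p. E l p \<and> (\<exists>r\<in>Z. E p r))}"

lemma leafless_not_leaf: "r \<in> leafless \<Longrightarrow> \<not> leaf V E r"
  using leaf_not_two_neighbours by (auto simp: leafless_def)

lemma leafless_not_adjacent_leaf: "r \<in> leafless \<Longrightarrow> E r l \<Longrightarrow> \<not> leaf V E l"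
  by (simp add: leafless_def)

lemma leaves_near_subset: "leaves_near Z \<subseteq> enclosed"
  by (auto simp: leaves_near_def)

lemma leaves_near_escape:
  assumes "x \<in> leaves_near Z" "Z \<subseteq> leafless"
  shows "\<exists>y. E x y \<and> y \<notin> Z \<union> leaves_near Z"
proof -
  obtain p r where x: "leaf V E x" and p: "E x p" and r: "r \<in> Z" "E p r"
    using assms(1) by (auto simp: leaves_near_def)
  have "p \<notin> Z"
    using assms(2) leafless_not_adjacent_leaf edge_sym[OF p] x by blast
  moreover have "\<not> leaf V E p"
    using leaf_neighbour_unique[OF _ edge_sym[OF p] r(2)] x r(1) assms(2) leafless_not_leaf by blast
  ultimately show ?thesis
    using p by (auto simp: leaves_near_def)
qed

context
  fixes Y :: "'a set"
  assumes Y_leafless: "Y \<subseteq> leafless"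
    and Y_independent: "\<forall>a\<in>Y. \<forall>b\<in>Y. \<not> E a b"
    and Y_closed: "\<forall>y\<in>Y. \<forall>u. E y u \<longrightarrow> u \<in> leafless"
    and Y_maximal: "\<forall>x\<in>leafless - Y. (\<forall>u. E x u \<longrightarrow> u \<in> leafless) \<longrightarrow> (\<exists>y\<in>Y. E x y)"
begin

lemma leafless_Diff_escape:
  assumes x: "x \<in> leafless - Y"
  shows "\<exists>y. E x y \<and> y \<notin> (leafless - Y) \<union> leaves_near (leafless - Y)"
proof (cases "\<forall>u. E x u \<longrightarrow> u \<in> leafless")
  case True
  then obtain y where "y \<in> Y" "E x y"
    using Y_maximal x by blast
  then show ?thesis
    using Y_leafless leafless_not_leaf by (auto simp: leaves_near_def)
next
  case False
  then obtain u where "E x u" "u \<notin> leafless"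
    by blast
  then show ?thesis
    using x leafless_not_adjacent_leaf by (auto simp: leaves_near_def)
qed

lemma leafless_Diff_not_one:
  assumes w: "w \<in> enclosed - ((leafless - Y) \<union> leaves_near (leafless - Y))"
  shows "card (nbhd V E w \<inter> ((leafless - Y) \<union> leaves_near (leafless - Y))) \<noteq> 1"
proof -
  let ?Z = "leafless - Y"
  let ?X = "?Z \<union> leaves_near ?Z"
  have near_support: "\<exists>r\<in>?Z. E w r" if z: "z \<in> nbhd V E w" "z \<in> ?X" for z
  proof (cases "z \<in> ?Z")
    case False
    then obtain q r where "leaf V E z" "E z q" "r \<in> ?Z" "E q r"
      using z(2) by (auto simp: leaves_near_def)
    moreover have "q = w"
      using leaf_neighbour_unique[OF calculation(1,2)] edge_sym[of w z] z(1) by simp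
    ultimately show ?thesis
      by blast
  qed (use z in auto)
  consider "w \<in> Y" | "w \<notin> leafless" "leaf V E w" | "w \<notin> leafless" "\<not> leaf V E w"
    using w by blast
  then show ?thesis
  proof cases
    case 1
    then have "nbhd V E w \<inter> ?X = nbhd V E w"
      using Y_closed Y_independent by auto
    then show ?thesis
      using 1 Y_leafless by (auto simp: leafless_def)
  next
    case 2
    have "nbhd V E w \<inter> ?X = {}"
    proof (rule ccontr)
      assume "nbhd V E w \<inter> ?X \<noteq> {}"
      then obtain z where "z \<in> nbhd V E w" "z \<in> ?X"
        by blast
      then obtain r where "r \<in> ?Z" "E w r"
        using near_support by blast
      then show False
        using 2(2) leafless_not_adjacent_leaf edge_sym by blast
    qed
    then show ?thesis by simp
  next
    case 3
    have "2 \<le> card (nbhd V E w)"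
      using 3(2) w enclosed_subset no_isolated two_le_card_nbhd by blast
    then obtain l where l: "E w l" "leaf V E l"
      using 3(1) w by (auto simp: leafless_def)
    show ?thesis
    proof (cases "\<exists>r\<in>?Z. E w r")
      case True
      then obtain r where r: "r \<in> ?Z" "E w r"
        by blast
      have "l \<in> enclosed"
        using w l leaf_neighbour_enclosed by blast
      with l r have "l \<in> leaves_near ?Z"
        unfolding leaves_near_def using edge_sym by blast
      moreover have "r \<noteq> l"
        using r(1) l(2) leafless_not_leaf by blast
      ultimately have "card {l, r} \<le> card (nbhd V E w \<inter> ?X)"
        using l r by (intro card_mono) (auto simp: finite_nbhd)
      with \<open>r \<noteq> l\<close> show ?thesis
        by auto
    next
      case False
      then have "nbhd V E w \<inter> ?X = {}"
        using near_support by blast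
      then show ?thesis by simp
    qed
  qed
qed

end

lemma leafless_empty: "leafless = {}"
proof (rule ccontr)
  assume "leafless \<noteq> {}"
  then obtain v where v: "v \<in> leafless"
    by blast
  define U where "U = {r \<in> leafless. \<forall>u. E r u \<longrightarrow> u \<in> leafless}"
  have "finite U"
    using enclosed_subset finite_vertices by (auto simp: U_def leafless_def intro: finite_subset)
  then obtain Y where YU: "Y \<subseteq> U" and indep: "\<forall>a\<in>Y. \<forall>b\<in>Y. \<not> E a b"
    and max: "\<forall>x\<in>U - Y. \<exists>y\<in>Y. E x y"
    by (rule maximal_independent_subset)
  have Y_leafless: "Y \<subseteq> leafless" and Y_closed: "\<forall>y\<in>Y. \<forall>u. E y u \<longrightarrow> u \<in> leafless"
    using YU by (auto simp: U_def)
  have Y_maximal: "\<forall>x\<in>leafless - Y. (\<forall>u. E x u \<longrightarrow> u \<in> leafless) \<longrightarrow> (\<exists>y\<in>Y. E x y)"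
    using max by (auto simp: U_def)
  define Z where "Z = leafless - Y"
  have "Z \<noteq> {}"
  proof (cases "v \<in> Y")
    case True
    have "v \<in> V"
      using v enclosed_subset by (auto simp: leafless_def)
    then obtain u where "E v u"
      using no_isolated by blast
    with True Y_closed indep have "u \<in> Z"
      by (auto simp: Z_def)
    then show ?thesis
      by blast
  qed (use v Z_def in auto)
  show False
  proof (rule no_removable_subset[of "Z \<union> leaves_near Z"])
    show "Z \<union> leaves_near Z \<subseteq> enclosed"
      using leaves_near_subset by (auto simp: Z_def leafless_def)
    show "\<forall>x\<in>Z \<union> leaves_near Z. \<exists>y. E x y \<and> y \<notin> Z \<union> leaves_near Z"
      using leafless_Diff_escape[OF Y_leafless indep Y_closed Y_maximal]
        leaves_near_escape[of _ Z] by (auto simp: Z_def)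
    show "\<forall>w\<in>enclosed - (Z \<union> leaves_near Z). card (nbhd V E w \<inter> (Z \<union> leaves_near Z)) \<noteq> 1"
      using leafless_Diff_not_one[OF Y_leafless indep Y_closed Y_maximal] by (simp add: Z_def)
  qed (use \<open>Z \<noteq> {}\<close> in simp)
qed

lemma enclosed_has_leaf_neighbour:
  assumes "v \<in> enclosed" "\<not> leaf V E v"
  shows "\<exists>l. E v l \<and> leaf V E l"
proof -
  have "2 \<le> card (nbhd V E v)"
    using assms enclosed_subset no_isolated two_le_card_nbhd by blast
  with assms(1) leafless_empty show ?thesis
    by (auto simp: leafless_def)
qed

lemma enclosed_weak_support:
  assumes v: "v \<in> enclosed" and "\<not> leaf V E v"
  shows "weak_support V E v"
proof -
  obtain l where l: "E v l" "leaf V E l"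
    using enclosed_has_leaf_neighbour assms by blast
  then have "{u \<in> nbhd V E v. leaf V E u} = {l}"
    using enclosed_at_most_one_leaf[OF v] by auto
  then show ?thesis
    using v enclosed_subset by (auto simp: weak_support_def)
qed

lemma corona_enclosed:
  assumes connected: "connected_graph V E"
  shows "corona enclosed E"
proof (cases "\<exists>a\<in>enclosed. \<exists>b. leaf V E a \<and> leaf V E b \<and> E a b")
  case True
  then obtain a b where a: "a \<in> enclosed" "leaf V E a" and b: "leaf V E b" "E a b"
    by blast
  have "V = {a, b}"
    using connected_adjacent_leaves[OF connected a(2) b] .
  moreover have "b \<in> enclosed"
    using leaf_neighbour_enclosed[OF a(1) b(2,1)] .
  ultimately have "enclosed = {a, b}"
    using a(1) enclosed_subset by blast
  moreover have "nbhd {a, b} E b = {a}"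
    using nbhd_subset_restrict[of "{a, b}" b] \<open>V = {a, b}\<close>
      leaf_nbhd[OF b(1) edge_sym[OF b(2)]] by simp
  moreover have "a \<noteq> b"
    using b(2) edge_irrefl by blast
  ultimately show ?thesis
    unfolding corona_def by (intro exI[of _ "{a}"] exI[of _ "\<lambda>_. b"]) (auto simp: bij_betw_def)
next
  case False
  show ?thesis
  proof (rule corona_by_unique_leaves)
    show "enclosed \<subseteq> V"
      by (rule enclosed_subset)
    show "\<exists>p\<in>enclosed. E s p \<and> \<not> leaf V E p" if "s \<in> enclosed" "leaf V E s" for s
      using enclosed_has_enclosed_neighbour[OF that(1)] False that by blast
    show "\<exists>!l. E h l \<and> leaf V E l" if h: "h \<in> enclosed" "\<not> leaf V E h" for h
    proof -
      obtain l where "E h l" "leaf V E l"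
        using enclosed_has_leaf_neighbour[OF h] by blast
      then show ?thesis
        using enclosed_at_most_one_leaf[OF h(1)] by (intro ex1I[of _ l]) auto
    qed
  qed (rule leaf_neighbour_enclosed)
qed

end

theorem lemma3p1:
  fixes V :: "'a set" and E :: "'a \<Rightarrow> 'a \<Rightarrow> bool" and D :: "'a set"
  assumes "simple_graph V E" and "connected_graph V E" and "card V \<ge> 2"
    and "minimal_certified_dominating V E D"
  shows "(\<forall>v \<in> V. cnbhd V E v \<subseteq> D \<longrightarrow> leaf V E v \<or> weak_support V E v)
    \<and> (let S = {v \<in> D. cnbhd V E v \<subseteq> D} in S = {} \<or> corona S E)"
proof -
  interpret graph V E
    using assms(1) by unfold_locales
  interpret minimal_certified_dom V E D
    using assms(4) connected_has_neighbour[OF assms(2,3)] by unfold_locales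
  have "leaf V E v \<or> weak_support V E v" if "cnbhd V E v \<subseteq> D" for v
    using that enclosed_weak_support by (auto simp: enclosed_def cnbhd_def)
  moreover have "corona {v \<in> D. cnbhd V E v \<subseteq> D} E"
    using corona_enclosed[OF assms(2)] by (simp add: enclosed_def)
  ultimately show ?thesis
    by simp
qed

end
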